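(* Let $r_2\geq 4$ be an even integer. Then there is no graph with parameters $(r_2,r_3)$ for any integer $r_3$ with $4\binom{r_2/2}{2}<r_3<\binom{r_2}{2}$ or $\binom{r_2-1}{2}<r_3<4\binom{r_2/2}{2}$. Moreover, $K_{r_2+1}$ has parameters $(r_2,\binom{r_2}{2})$, $\operatorname{Turan}(r_2+2, r_2/2+1)$ has parameters $(r_2, 4\binom{r_2/2}{2})$, and $K_{r_2}\square K_2$ has parameters $(r_2,\binom{r_2-1}{2})$.
   Context: All graphs are finite, simple and undirected. The $K_3$-degree of a vertex $v$ is the number of triangles containing $v$. A graph $G$ has parameters $(r_2,r_3)$ if every vertex has degree $r_2$ and every vertex has $K_3$-degree $r_3$. $K_n$ is the complete graph on $n$ vertices. For $r\mid n$, $\operatorname{Turan}(n,r)$ is the complete multipartite graph on $n$ vertices with $r$ parts each of size $n/r$. The Cartesian product $G_1\square G_2$ has vertex set $V(G_1)\times V(G_2)$, with $(u,v)$ and $(u',v')$ adjacent iff either $u=u'$ and $vv'\in E(G_2)$, or $v=v'$ and $uu'\in E(G_1)$. *)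

theory Defs
  imports Main
begin

type_synonym 'a graph = "'a set \<times> ('a \<Rightarrow> 'a \<Rightarrow> bool)"

definition simple_graph :: "'a graph \<Rightarrow> bool" where
  "simple_graph G \<longleftrightarrow> finite (fst G)
     \<and> (\<forall>u v. snd G u v \<longrightarrow> u \<in> fst G \<and> v \<in> fst G)
     \<and> (\<forall>u v. snd G u v \<longrightarrow> snd G v u)
     \<and> (\<forall>v. \<not> snd G v v)"

definition degree :: "'a graph \<Rightarrow> 'a \<Rightarrow> nat" where
  "degree G v = card {u \<in> fst G. snd G v u}"

definition triangles :: "'a graph \<Rightarrow> 'a set set" where
  "triangles G = {T. T \<subseteq> fst G \<and> card T = 3 \<and> (\<forall>u\<in>T. \<forall>w\<in>T. u \<noteq> w \<longrightarrow> snd G u w)}"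

definition k3_degree :: "'a graph \<Rightarrow> 'a \<Rightarrow> nat" where
  "k3_degree G v = card {T \<in> triangles G. v \<in> T}"

definition has_params :: "'a graph \<Rightarrow> nat \<Rightarrow> nat \<Rightarrow> bool" where
  "has_params G r2 r3 \<longleftrightarrow> (\<forall>v\<in>fst G. degree G v = r2 \<and> k3_degree G v = r3)"

definition complete_graph :: "nat \<Rightarrow> nat graph" where
  "complete_graph n = ({0..<n}, \<lambda>i j. i < n \<and> j < n \<and> i \<noteq> j)"

text \<open>Turan n r: complete r-partite graph on {0..<n}; the parts are the residue
  classes mod r, each of size n/r when r divides n.\<close>
definition turan :: "nat \<Rightarrow> nat \<Rightarrow> nat graph" where
  "turan n r = ({0..<n}, \<lambda>i j. i < n \<and> j < n \<and> i mod r \<noteq> j mod r)"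

definition cart_prod :: "'a graph \<Rightarrow> 'b graph \<Rightarrow> ('a \<times> 'b) graph" where
  "cart_prod G1 G2 = (fst G1 \<times> fst G2,
     \<lambda>(u, v) (u', v'). u \<in> fst G1 \<and> u' \<in> fst G1 \<and> v \<in> fst G2 \<and> v' \<in> fst G2 \<and>
        ((u = u' \<and> snd G2 v v') \<or> (v = v' \<and> snd G1 u u')))"

end

theory Submission
  imports Defs
begin

text \<open>In a graph with parameters \<open>(n, t)\<close>, every neighbourhood spans the same number of
  non-edges; twice that number is \<open>D = n(n - 1) - 2t\<close>, and the excluded ranges of \<open>t\<close> are exactly
  \<open>0 < D < n\<close> and \<open>n < D < 2n - 2\<close>. Double counting non-edges around the common neighbours of
  an edge \<open>uv\<close> shows \<open>|N(u) - N[v]| (2 + |N(u) \<inter> N(v)|) \<le> D\<close>, so an edge with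
  \<open>|N(u) - N[v]| \<ge> 2\<close> forces \<open>D \<ge> 2(n - 1)\<close>. Such an edge exists when \<open>D > n\<close> by averaging
  over a neighbourhood, and also when \<open>0 < D < n\<close>.\<close>

definition nbhd :: "'a graph \<Rightarrow> 'a \<Rightarrow> 'a set" where
  "nbhd G v = {u \<in> fst G. snd G v u}"

definition closed_nbhd :: "'a graph \<Rightarrow> 'a \<Rightarrow> 'a set" where
  "closed_nbhd G v = insert v (nbhd G v)"

text \<open>Its cardinality is twice the number of non-edges inside the neighbourhood of \<open>w\<close>.\<close>
definition nbhd_nonedges :: "'a graph \<Rightarrow> 'a \<Rightarrow> ('a \<times> 'a) set" where
  "nbhd_nonedges G w = (SIGMA a:nbhd G w. nbhd G w - closed_nbhd G a)"

lemma degree_eq_card_nbhd: "degree G v = card (nbhd G v)"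
  by (simp add: degree_def nbhd_def)

lemma nbhd_subset_vertices: "nbhd G v \<subseteq> fst G"
  by (auto simp: nbhd_def)

lemma card_filter_sum_swap:
  assumes "finite A" "finite B"
  shows "(\<Sum>a\<in>A. card {T \<in> B. a \<in> T}) = (\<Sum>T\<in>B. card {a \<in> A. a \<in> T})"
  using sum.swap_restrict[OF assms, of "\<lambda>_ _. 1::nat" "\<lambda>a T. a \<in> T"]
  by simp

lemma two_mult_choose_two: "2 * (n choose 2) = n * (n - 1)"
proof -
  have "even (n * (n - 1))"
    by (cases "even n") auto
  then show ?thesis
    by (simp add: choose_two)
qed

locale sgraph =
  fixes G :: "'a graph"
  assumes simple: "simple_graph G"
begin

lemma finite_vertices: "finite (fst G)"
  using simple by (simp add: simple_graph_def)

lemma adj_vertices: "snd G u v \<Longrightarrow> u \<in> fst G \<and> v \<in> fst G"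
  using simple by (simp add: simple_graph_def)

lemma adj_sym: "snd G u v \<Longrightarrow> snd G v u"
  using simple by (simp add: simple_graph_def)

lemma mem_nbhd_iff: "a \<in> nbhd G v \<longleftrightarrow> snd G v a"
  using adj_vertices by (auto simp: nbhd_def)

lemma mem_nbhd_sym: "a \<in> nbhd G v \<longleftrightarrow> v \<in> nbhd G a"
  using adj_sym by (auto simp: mem_nbhd_iff)

lemma not_mem_nbhd_self: "v \<notin> nbhd G v"
  using simple by (simp add: mem_nbhd_iff simple_graph_def)

lemma finite_nbhd: "finite (nbhd G v)"
  using finite_subset[OF nbhd_subset_vertices finite_vertices] .

lemma finite_closed_nbhd: "finite (closed_nbhd G v)"
  by (simp add: closed_nbhd_def finite_nbhd)

lemma card_closed_nbhd: "card (closed_nbhd G v) = Suc (card (nbhd G v))"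
  by (simp add: closed_nbhd_def finite_nbhd not_mem_nbhd_self)

lemma card_nbhd_split:
  assumes "a \<in> nbhd G w"
  shows "card (nbhd G w) = 1 + card (nbhd G w \<inter> nbhd G a) + card (nbhd G w - closed_nbhd G a)"
proof -
  let ?S = "(nbhd G w \<inter> nbhd G a) \<union> (nbhd G w - closed_nbhd G a)"
  have split: "nbhd G w = insert a ?S" and notin: "a \<notin> ?S"
    using assms not_mem_nbhd_self[of a] by (auto simp: closed_nbhd_def)
  have "card ?S = card (nbhd G w \<inter> nbhd G a) + card (nbhd G w - closed_nbhd G a)"
    by (rule card_Un_disjoint) (auto simp: finite_nbhd closed_nbhd_def)
  moreover have "card (insert a ?S) = Suc (card ?S)"
    using notin by (simp add: finite_nbhd)
  ultimately show ?thesis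
    using split by simp
qed

lemma card_common_nbhd_eq_card_triangles:
  assumes a: "a \<in> nbhd G v"
  shows "card (nbhd G v \<inter> nbhd G a) = card {T \<in> triangles G. v \<in> T \<and> a \<in> T}"
proof -
  have av: "a \<noteq> v"
    using a not_mem_nbhd_self by blast
  have "{T \<in> triangles G. v \<in> T \<and> a \<in> T} = (\<lambda>y. {v, a, y}) ` (nbhd G v \<inter> nbhd G a)"
  proof (intro equalityI subsetI)
    fix T assume T: "T \<in> {T \<in> triangles G. v \<in> T \<and> a \<in> T}"
    then have "card T = 3" and adj: "\<forall>p\<in>T. \<forall>q\<in>T. p \<noteq> q \<longrightarrow> snd G p q"
      and "v \<in> T" "a \<in> T"
      by (auto simp: triangles_def)
    then have "card (T - {v, a}) = 1"
      using av by (simp add: card_Diff_subset card.infinite)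
    then obtain y where y: "T - {v, a} = {y}"
      using card_1_singletonE by blast
    then have "T = {v, a, y}" and "y \<in> nbhd G v \<inter> nbhd G a"
      using \<open>v \<in> T\<close> \<open>a \<in> T\<close> adj by (auto simp: mem_nbhd_iff)
    then show "T \<in> (\<lambda>y. {v, a, y}) ` (nbhd G v \<inter> nbhd G a)"
      by blast
  next
    fix T assume "T \<in> (\<lambda>y. {v, a, y}) ` (nbhd G v \<inter> nbhd G a)"
    then obtain y where y: "y \<in> nbhd G v" "y \<in> nbhd G a" and T: "T = {v, a, y}"
      by blast
    have "y \<noteq> v" "y \<noteq> a"
      using y not_mem_nbhd_self by blast+
    moreover have "T \<subseteq> fst G"
      using T a y by (auto simp: mem_nbhd_iff dest: adj_vertices)
    moreover have "snd G v a" "snd G v y" "snd G a y"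
      using a y by (simp_all add: mem_nbhd_iff)
    ultimately show "T \<in> {T \<in> triangles G. v \<in> T \<and> a \<in> T}"
      using T av adj_sym by (auto simp: triangles_def)
  qed
  moreover have "inj_on (\<lambda>y. {v, a, y}) (nbhd G v \<inter> nbhd G a)"
    using not_mem_nbhd_self by (auto simp: inj_on_def insert_commute)
  ultimately show ?thesis
    by (simp add: card_image)
qed

lemma two_mult_k3_degree:
  "2 * k3_degree G v = (\<Sum>a\<in>nbhd G v. card (nbhd G v \<inter> nbhd G a))"
proof -
  let ?K = "{T \<in> triangles G. v \<in> T}"
  have "finite ?K"
    by (rule finite_subset[of _ "Pow (fst G)"]) (auto simp: triangles_def finite_vertices)
  have "(\<Sum>a\<in>nbhd G v. card (nbhd G v \<inter> nbhd G a)) = (\<Sum>a\<in>nbhd G v. card {T \<in> ?K. a \<in> T})"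
    by (intro sum.cong refl) (auto simp: card_common_nbhd_eq_card_triangles intro!: arg_cong[where f = card])
  also have "\<dots> = (\<Sum>T\<in>?K. card {a \<in> nbhd G v. a \<in> T})"
    using finite_nbhd \<open>finite ?K\<close> by (rule card_filter_sum_swap)
  also have "\<dots> = (\<Sum>T\<in>?K. 2)"
  proof (intro sum.cong refl)
    fix T assume T: "T \<in> ?K"
    then have "{a \<in> nbhd G v. a \<in> T} = T - {v}"
      using not_mem_nbhd_self by (auto simp: triangles_def mem_nbhd_iff)
    then show "card {a \<in> nbhd G v. a \<in> T} = 2"
      using T by (simp add: triangles_def card.infinite)
  qed
  finally show ?thesis
    by (simp add: k3_degree_def)
qed

lemma card_nbhd_nonedges:
  "card (nbhd_nonedges G v) = (\<Sum>a\<in>nbhd G v. card (nbhd G v - closed_nbhd G a))"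
  by (simp add: nbhd_nonedges_def finite_nbhd)

lemma card_nbhd_nonedges_add_k3_degree:
  "card (nbhd_nonedges G v) + 2 * k3_degree G v = degree G v * (degree G v - 1)"
proof -
  have "(\<Sum>a\<in>nbhd G v. card (nbhd G v) - 1)
      = (\<Sum>a\<in>nbhd G v. card (nbhd G v - closed_nbhd G a) + card (nbhd G v \<inter> nbhd G a))"
    by (intro sum.cong refl) (simp add: card_nbhd_split)
  then show ?thesis
    by (simp add: card_nbhd_nonedges two_mult_k3_degree degree_eq_card_nbhd sum.distrib)
qed

lemma has_paramsI:
  assumes "\<And>v. v \<in> fst G \<Longrightarrow> card (nbhd G v) = r2"
    and "\<And>v. v \<in> fst G \<Longrightarrow> (\<Sum>a\<in>nbhd G v. card (nbhd G v \<inter> nbhd G a)) = 2 * r3"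
  shows "has_params G r2 r3"
  using assms by (simp add: has_params_def degree_eq_card_nbhd flip: two_mult_k3_degree)

lemma card_nbhd_nonedge_count_lower_bound:
  assumes uv: "snd G u v"
  shows "(\<Sum>c\<in>nbhd G u \<inter> nbhd G v.
            card (nbhd G u - closed_nbhd G c) + card (nbhd G u - closed_nbhd G v - nbhd G c))
         + 2 * card (nbhd G u - closed_nbhd G v) \<le> card (nbhd_nonedges G u)"
proof -
  define C where "C = nbhd G u \<inter> nbhd G v"
  define P where "P = nbhd G u - closed_nbhd G v"
  define A where "A = (SIGMA c:C. nbhd G u - closed_nbhd G c)"
  define B where "B = prod.swap ` (SIGMA c:C. P - nbhd G c)"
  define S where "S = {v} \<times> P \<union> P \<times> {v}"
  have v: "v \<in> nbhd G u" "v \<notin> C" "v \<notin> P"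
    using uv not_mem_nbhd_self by (auto simp: C_def P_def closed_nbhd_def mem_nbhd_iff)
  have "C \<inter> P = {}"
    by (auto simp: C_def P_def closed_nbhd_def)
  then have disjoint: "A \<inter> B = {}" "(A \<union> B) \<inter> S = {}"
    using v by (auto simp: A_def B_def S_def)
  have "A \<union> B \<union> S \<subseteq> nbhd_nonedges G u"
    using v \<open>C \<inter> P = {}\<close> mem_nbhd_sym
    by (auto simp: nbhd_nonedges_def A_def B_def S_def C_def P_def closed_nbhd_def)
  then have "card (A \<union> B \<union> S) \<le> card (nbhd_nonedges G u)"
    by (rule card_mono[rotated]) (simp add: nbhd_nonedges_def finite_nbhd)
  moreover have "finite A" "finite B" "finite S" "finite P"
    by (simp_all add: A_def B_def S_def C_def P_def finite_nbhd)
  moreover have "card A = (\<Sum>c\<in>C. card (nbhd G u - closed_nbhd G c))"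
    by (simp add: A_def C_def finite_nbhd)
  moreover have "card B = (\<Sum>c\<in>C. card (P - nbhd G c))"
    by (simp add: B_def C_def P_def card_image finite_nbhd)
  moreover have "card S = 2 * card P"
  proof -
    have "({v} \<times> P) \<inter> (P \<times> {v}) = {}"
      using v by auto
    then show ?thesis
      using \<open>finite P\<close> by (simp add: S_def card_Un_disjoint card_cartesian_product)
  qed
  ultimately show ?thesis
    using disjoint by (simp add: card_Un_disjoint sum.distrib C_def P_def)
qed

end

locale regular_graph = sgraph +
  fixes n :: nat
  assumes card_nbhd_eq: "v \<in> fst G \<Longrightarrow> card (nbhd G v) = n"
begin

lemma card_private_nbhd_sym:
  assumes "snd G u v"
  shows "card (nbhd G u - closed_nbhd G v) = card (nbhd G v - closed_nbhd G u)"
  using card_nbhd_split[of v u] card_nbhd_split[of u v] assms adj_sym[OF assms]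
    adj_vertices[OF assms] card_nbhd_eq
  by (simp add: mem_nbhd_iff Int_commute)

lemma card_private_nbhd_le:
  assumes uv: "snd G u v" and c: "c \<in> nbhd G u \<inter> nbhd G v"
  shows "card (nbhd G u - closed_nbhd G v) \<le> card ((nbhd G u \<union> nbhd G v) - closed_nbhd G c)"
proof -
  have "u \<in> fst G" "v \<in> fst G" "c \<in> fst G"
    using adj_vertices[OF uv] c nbhd_subset_vertices[of G u] by blast+
  moreover have "card (nbhd G u \<union> nbhd G v) + card (nbhd G u \<inter> nbhd G v)
      = card (nbhd G u) + card (nbhd G v)"
    using card_Un_Int[OF finite_nbhd finite_nbhd] by simp
  moreover have "v \<in> nbhd G u"
    using uv by (simp add: mem_nbhd_iff)
  ultimately have "card (nbhd G u \<union> nbhd G v) = card (nbhd G u - closed_nbhd G v) + card (closed_nbhd G c)"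
    using card_nbhd_split[of v u] card_nbhd_eq by (simp add: card_closed_nbhd)
  then show ?thesis
    using diff_card_le_card_Diff[OF finite_closed_nbhd[of c], where A = "nbhd G u \<union> nbhd G v"] by simp
qed

text \<open>For a common neighbour \<open>c\<close> of \<open>u\<close> and \<open>v\<close>, the set \<open>X = (N(u) \<union> N(v)) - N[c]\<close> has at
  least \<open>|N(u) - N[v]|\<close> elements by regularity, and it is covered in two ways by the sets
  summed in \<open>card_nbhd_nonedges_lower_bound\<close> for \<open>u\<close> and for \<open>v\<close>.\<close>
lemma private_nbhd_bound:
  assumes uv: "snd G u v"
  shows "2 * card (nbhd G u - closed_nbhd G v) * (2 + card (nbhd G u \<inter> nbhd G v))
         \<le> card (nbhd_nonedges G u) + card (nbhd_nonedges G v)"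
proof -
  define C where "C = nbhd G u \<inter> nbhd G v"
  define d where "d = card (nbhd G u - closed_nbhd G v)"
  define f where "f x y c = card (nbhd G x - closed_nbhd G c) + card (nbhd G x - closed_nbhd G y - nbhd G c)"
    for x y c
  have "2 * d \<le> f u v c + f v u c" if c: "c \<in> C" for c
  proof -
    let ?X = "(nbhd G u \<union> nbhd G v) - closed_nbhd G c"
    have "c \<in> nbhd G u" "c \<in> nbhd G v" "u \<in> nbhd G c" "v \<in> nbhd G c"
      using c mem_nbhd_sym by (auto simp: C_def)
    then have "?X \<subseteq> (nbhd G u - closed_nbhd G v - nbhd G c) \<union> (nbhd G v - closed_nbhd G c)"
      and "?X \<subseteq> (nbhd G u - closed_nbhd G c) \<union> (nbhd G v - closed_nbhd G u - nbhd G c)"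
      by (auto simp: closed_nbhd_def)
    then have "card ?X \<le> card (nbhd G u - closed_nbhd G v - nbhd G c) + card (nbhd G v - closed_nbhd G c)"
      and "card ?X \<le> card (nbhd G u - closed_nbhd G c) + card (nbhd G v - closed_nbhd G u - nbhd G c)"
      by (meson card_Un_le card_mono finite_Un finite_Diff finite_nbhd order_trans)+
    moreover have "d \<le> card ?X"
      using card_private_nbhd_le[OF uv] c by (simp add: C_def d_def)
    ultimately show ?thesis
      by (simp add: f_def)
  qed
  then have "2 * d * card C \<le> (\<Sum>c\<in>C. f u v c) + (\<Sum>c\<in>C. f v u c)"
    using sum_mono[of C "\<lambda>_. 2 * d" "\<lambda>c. f u v c + f v u c"] by (simp add: sum.distrib mult.commute)
  moreover have "(\<Sum>c\<in>C. f u v c) + 2 * d \<le> card (nbhd_nonedges G u)"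
    using card_nbhd_nonedge_count_lower_bound[OF uv] by (simp add: C_def d_def f_def)
  moreover have "(\<Sum>c\<in>C. f v u c) + 2 * d \<le> card (nbhd_nonedges G v)"
    using card_nbhd_nonedge_count_lower_bound[OF adj_sym[OF uv]] card_private_nbhd_sym[OF uv]
    by (simp add: C_def d_def f_def Int_commute)
  ultimately show ?thesis
    by (simp add: C_def d_def algebra_simps)
qed

end

locale nonedge_regular = regular_graph +
  fixes D :: nat
  assumes card_nbhd_nonedges_eq: "v \<in> fst G \<Longrightarrow> card (nbhd_nonedges G v) = D"
begin

lemma nonedge_count_lower_bound:
  assumes uv: "snd G u v" and two: "2 \<le> card (nbhd G u - closed_nbhd G v)"
  shows "2 * (n - 1) \<le> D"
proof -
  define c where "c = card (nbhd G u \<inter> nbhd G v)"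
  define d where "d = card (nbhd G u - closed_nbhd G v)"
  have "2 * d + d * c \<le> D"
    using private_nbhd_bound[OF uv] adj_vertices[OF uv] card_nbhd_nonedges_eq
    by (simp add: c_def d_def algebra_simps)
  moreover have "n = 1 + c + d"
    using card_nbhd_split[of v u] uv adj_vertices[OF uv] card_nbhd_eq
    by (simp add: c_def d_def mem_nbhd_iff)
  moreover have "2 * c \<le> d * c"
    using two mult_right_mono by (simp add: d_def)
  ultimately show ?thesis
    by linarith
qed

lemma exists_two_le_card_private_nbhd_if_greater:
  assumes v: "v \<in> fst G" and "n < D"
  shows "\<exists>a\<in>nbhd G v. 2 \<le> card (nbhd G v - closed_nbhd G a)"
proof (rule ccontr)
  assume "\<not> ?thesis"
  then have "\<forall>a\<in>nbhd G v. card (nbhd G v - closed_nbhd G a) \<le> 1"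
    by auto
  then have "(\<Sum>a\<in>nbhd G v. card (nbhd G v - closed_nbhd G a)) \<le> (\<Sum>a\<in>nbhd G v. 1)"
    by (intro sum_mono) simp
  then show False
    using assms card_nbhd_eq card_nbhd_nonedges_eq by (simp add: card_nbhd_nonedges)
qed

text \<open>If \<open>0 < D < n\<close>, some neighbour \<open>i\<close> of \<open>v\<close> is adjacent to all other neighbours of \<open>v\<close>,
  so \<open>N[i] = N[v]\<close> by regularity, while some other neighbour \<open>a\<close> has a neighbour \<open>x \<notin> N[v]\<close>.
  Then \<open>v\<close> and \<open>i\<close> are two neighbours of \<open>a\<close> outside \<open>N[x]\<close>.\<close>
lemma exists_two_le_card_private_nbhd_if_less:
  assumes v: "v \<in> fst G" and "0 < D" "D < n"
  shows "\<exists>a x. snd G a x \<and> 2 \<le> card (nbhd G a - closed_nbhd G x)"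
proof -
  define I where "I = {i \<in> nbhd G v. nbhd G v - closed_nbhd G i = {}}"
  have D_eq: "D = (\<Sum>a\<in>nbhd G v. card (nbhd G v - closed_nbhd G a))"
    using v card_nbhd_nonedges_eq by (simp add: card_nbhd_nonedges)
  have "card (nbhd G v - I) = (\<Sum>a\<in>nbhd G v - I. 1)"
    by simp
  also have "\<dots> \<le> (\<Sum>a\<in>nbhd G v - I. card (nbhd G v - closed_nbhd G a))"
    by (intro sum_mono) (auto simp: I_def Suc_le_eq card_gt_0_iff finite_nbhd)
  also have "\<dots> \<le> D"
    unfolding D_eq by (intro sum_mono2) (auto simp: finite_nbhd)
  finally have "I \<noteq> {}"
    using \<open>D < n\<close> v card_nbhd_eq by auto
  then obtain i where i: "i \<in> nbhd G v" "nbhd G v - closed_nbhd G i = {}"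
    by (auto simp: I_def)
  have "closed_nbhd G v \<subseteq> closed_nbhd G i"
    using i mem_nbhd_sym by (auto simp: closed_nbhd_def)
  then have closed_eq: "closed_nbhd G i = closed_nbhd G v"
    using i(1) v nbhd_subset_vertices[of G v] card_nbhd_eq
    by (intro card_subset_eq[symmetric] finite_closed_nbhd) (auto simp: card_closed_nbhd)
  obtain a where a: "a \<in> nbhd G v" "nbhd G v - closed_nbhd G a \<noteq> {}"
    using \<open>0 < D\<close> D_eq by (metis card.empty sum.neutral less_irrefl)
  then have "card (nbhd G v - closed_nbhd G a) \<noteq> 0"
    by (simp add: finite_nbhd)
  then have "card (nbhd G a - closed_nbhd G v) \<noteq> 0"
    using card_private_nbhd_sym[of v a] a(1) by (simp add: mem_nbhd_iff)
  then obtain x where x: "x \<in> nbhd G a" "x \<notin> closed_nbhd G v"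
    by (metis DiffE card.empty ex_in_conv)
  have "a \<noteq> i"
    using a i by blast
  then have "{v, i} \<subseteq> nbhd G a - closed_nbhd G x"
    using a(1) i(1) x closed_eq mem_nbhd_sym
    by (auto simp: closed_nbhd_def)
  moreover have "v \<noteq> i"
    using i(1) not_mem_nbhd_self by blast
  ultimately have "2 \<le> card (nbhd G a - closed_nbhd G x)"
    using card_mono[OF _ \<open>{v, i} \<subseteq> _\<close>] by (simp add: finite_nbhd)
  then show ?thesis
    using x(1) by (auto simp: mem_nbhd_iff)
qed

theorem nonedge_count_not_in_gap:
  assumes "fst G \<noteq> {}" and "2 \<le> n"
    and "(0 < D \<and> D < n) \<or> (n < D \<and> D + 2 < 2 * n)"
  shows False
proof -
  obtain v where v: "v \<in> fst G"
    using assms(1) by blast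
  have "\<exists>a x. snd G a x \<and> 2 \<le> card (nbhd G a - closed_nbhd G x)"
    using exists_two_le_card_private_nbhd_if_less[OF v] exists_two_le_card_private_nbhd_if_greater[OF v]
      assms(3) mem_nbhd_iff by (metis order_less_trans)
  then show False
    using nonedge_count_lower_bound assms(2,3) by fastforce
qed

end

lemma (in sgraph) nonedge_regular_if_has_params:
  assumes "has_params G n t"
  shows "nonedge_regular G n (n * (n - 1) - 2 * t)"
proof unfold_locales
  fix v assume v: "v \<in> fst G"
  then show "card (nbhd G v) = n"
    using assms by (simp add: has_params_def degree_eq_card_nbhd)
  show "card (nbhd_nonedges G v) = n * (n - 1) - 2 * t"
    using v assms card_nbhd_nonedges_add_k3_degree[of v]
    by (simp add: has_params_def)
qed

lemma nonedge_count_in_gap: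
  fixes n t :: nat
  assumes "even n"
    and "(4 * (n div 2 choose 2) < t \<and> t < n choose 2)
         \<or> ((n - 1) choose 2 < t \<and> t < 4 * (n div 2 choose 2))"
  defines "D \<equiv> n * (n - 1) - 2 * t"
  shows "(0 < D \<and> D < n) \<or> (n < D \<and> D + 2 < 2 * n)"
proof -
  obtain k where n: "n = 2 * k"
    using assms(1) by blast
  have "k \<noteq> 0"
    using assms(2) n by (cases k) (auto simp: binomial_eq_0)
  then obtain j where k: "k = j + 1"
    using not0_implies_Suc by auto
  have choose: "2 * (n div 2 choose 2) = (j + 1) * j"
    "2 * (n choose 2) = (2 * j + 2) * (2 * j + 1)"
    "2 * ((n - 1) choose 2) = (2 * j + 1) * (2 * j)"
    using two_mult_choose_two[of k] two_mult_choose_two[of n] two_mult_choose_two[of "n - 1"]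
    by (simp_all add: n k)
  then have "2 * t < (2 * j + 2) * (2 * j + 1)"
    using assms(2) by (simp add: algebra_simps) linarith
  then have "D + 2 * t = (2 * j + 2) * (2 * j + 1)"
    by (simp add: D_def n k)
  then show ?thesis
    using assms(2) choose unfolding n k by (simp add: algebra_simps) linarith
qed

lemma has_params_complete_graph: "has_params (complete_graph (n + 1)) n (n choose 2)"
proof -
  have nbhd: "nbhd (complete_graph (Suc n)) v = {0..<Suc n} - {v}" if "v < Suc n" for v
    using that by (auto simp: nbhd_def complete_graph_def)
  interpret sgraph "complete_graph (n + 1)"
    by unfold_locales (auto simp: simple_graph_def complete_graph_def)
  show ?thesis
  proof (rule has_paramsI)
    fix v assume "v \<in> fst (complete_graph (n + 1))"
    then have v: "v < n + 1"
      by (simp add: complete_graph_def)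
    then show "card (nbhd (complete_graph (n + 1)) v) = n"
      by (simp add: nbhd)
    have "card (nbhd (complete_graph (n + 1)) v \<inter> nbhd (complete_graph (n + 1)) a) = n - 1"
      if "a \<in> nbhd (complete_graph (n + 1)) v" for a
    proof -
      have "a < n + 1" "a \<noteq> v"
        using that v by (auto simp: nbhd)
      moreover have "nbhd (complete_graph (n + 1)) v \<inter> nbhd (complete_graph (n + 1)) a
          = {0..<n + 1} - {v, a}"
        using v \<open>a < n + 1\<close> by (auto simp: nbhd)
      ultimately show ?thesis
        using v by (simp add: card_Diff_subset)
    qed
    then show "(\<Sum>a\<in>nbhd (complete_graph (n + 1)) v.
        card (nbhd (complete_graph (n + 1)) v \<inter> nbhd (complete_graph (n + 1)) a)) = 2 * (n choose 2)"
      using v by (simp add: nbhd two_mult_choose_two)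
  qed
qed


lemma has_params_cocktail_party: "has_params (turan (2 * r) r) (2 * (r - 1)) (2 * (r - 1) * (r - 2))"
proof (cases "r = 0")
  case True
  then show ?thesis
    by (simp add: has_params_def turan_def)
next
  case False
  let ?G = "turan (2 * r) r"
  have part: "{u. u < 2 * r \<and> u mod r = c} = {c, c + r}" if "c < r" for c
  proof -
    have "u mod r = (if u < r then u else u - r)" if "u < 2 * r" for u
      using that by (simp add: le_mod_geq)
    then show ?thesis
      using \<open>c < r\<close> by auto
  qed
  have nbhd: "nbhd ?G v = {0..<2 * r} - {v mod r, v mod r + r}" if "v < 2 * r" for v
  proof -
    have "nbhd ?G v = {0..<2 * r} - {u. u < 2 * r \<and> u mod r = v mod r}"
      using that by (auto simp: nbhd_def turan_def)
    then show ?thesis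
      using part[of "v mod r"] False by simp
  qed
  interpret sgraph ?G
    by unfold_locales (auto simp: simple_graph_def turan_def)
  show ?thesis
  proof (rule has_paramsI)
    fix v assume "v \<in> fst ?G"
    then have v: "v < 2 * r"
      by (simp add: turan_def)
    have "v mod r < r"
      using False by simp
    have "card {m, m + r} = 2" "{m, m + r} \<subseteq> {0..<2 * r}" if "m < r" for m
      using that False by auto
    then have "card {v mod r, v mod r + r} = 2" "{v mod r, v mod r + r} \<subseteq> {0..<2 * r}"
      using \<open>v mod r < r\<close> by blast+
    then show "card (nbhd ?G v) = 2 * (r - 1)"
      using v by (simp add: nbhd card_Diff_subset)
    have "card (nbhd ?G v \<inter> nbhd ?G a) = 2 * (r - 2)" if a: "a \<in> nbhd ?G v" for a
    proof -
      have "a < 2 * r" "a mod r \<noteq> v mod r"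
        using a v part[of "v mod r"] \<open>v mod r < r\<close> by (auto simp: nbhd)
      moreover have "card {x, x + r, y, y + r} = 4" "{x, x + r, y, y + r} \<subseteq> {0..<2 * r}"
        if "x < r" "y < r" "x \<noteq> y" for x y
        using that by auto
      moreover have "a mod r < r"
        using False by simp
      ultimately have "card {v mod r, v mod r + r, a mod r, a mod r + r} = 4"
        and "{v mod r, v mod r + r, a mod r, a mod r + r} \<subseteq> {0..<2 * r}"
        using \<open>v mod r < r\<close> by metis+
      moreover have "nbhd ?G v \<inter> nbhd ?G a = {0..<2 * r} - {v mod r, v mod r + r, a mod r, a mod r + r}"
        using v \<open>a < 2 * r\<close> by (auto simp: nbhd)
      ultimately show ?thesis
        by (simp add: card_Diff_subset)
    qed
    then show "(\<Sum>a\<in>nbhd ?G v. card (nbhd ?G v \<inter> nbhd ?G a)) = 2 * (2 * (r - 1) * (r - 2))"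
      using \<open>card (nbhd ?G v) = 2 * (r - 1)\<close> by simp
  qed
qed

lemma has_params_complete_prism:
  "has_params (cart_prod (complete_graph n) (complete_graph 2)) n ((n - 1) choose 2)"
proof -
  let ?G = "cart_prod (complete_graph n) (complete_graph 2)"
  have vertices: "fst ?G = {0..<n} \<times> {0..<2}"
    by (simp add: cart_prod_def complete_graph_def)
  have adj: "snd ?G (a, b) (a', b') \<longleftrightarrow>
      a < n \<and> a' < n \<and> b < 2 \<and> b' < 2 \<and> ((a = a' \<and> b \<noteq> b') \<or> (b = b' \<and> a \<noteq> a'))" for a b a' b'
    by (auto simp: cart_prod_def complete_graph_def)
  have nbhd: "nbhd ?G p = insert (fst p, 1 - snd p) (({0..<n} - {fst p}) \<times> {snd p})"
    if "fst p < n" "snd p < 2" for p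
  proof -
    have "snd p = 0 \<or> snd p = 1"
      using that(2) by auto
    then show ?thesis
      using that(1) by (cases p) (auto simp: nbhd_def vertices adj)
  qed
  interpret sgraph ?G
    by unfold_locales (auto simp: simple_graph_def vertices adj)
  show ?thesis
  proof (rule has_paramsI)
    fix v assume "v \<in> fst ?G"
    then obtain a b where v: "v = (a, b)" "a < n" "b < 2"
      by (auto simp: vertices)
    have notin: "(a, 1 - b) \<notin> ({0..<n} - {a}) \<times> {b}"
      by auto
    show "card (nbhd ?G v) = n"
      using v notin by (simp add: nbhd card_cartesian_product)
    have "nbhd ?G v \<inter> nbhd ?G (a, 1 - b) = {}"
      using v by (auto simp: nbhd) arith+
    moreover have "card (nbhd ?G v \<inter> nbhd ?G p) = n - 2" if p: "p \<in> ({0..<n} - {a}) \<times> {b}" for p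
    proof -
      have a': "fst p < n" "fst p \<noteq> a" "snd p = b"
        using p by auto
      then have "nbhd ?G v \<inter> nbhd ?G p = ({0..<n} - {a, fst p}) \<times> {b}"
        using v a' by (auto simp: nbhd) arith+
      then show ?thesis
        using a' v by (simp add: card_cartesian_product card_Diff_subset)
    qed
    ultimately have "(\<Sum>p\<in>nbhd ?G v. card (nbhd ?G v \<inter> nbhd ?G p)) = (n - 1) * (n - 2)"
      using v notin by (simp add: nbhd card_cartesian_product)
    then show "(\<Sum>p\<in>nbhd ?G v. card (nbhd ?G v \<inter> nbhd ?G p)) = 2 * ((n - 1) choose 2)"
      by (metis two_mult_choose_two diff_diff_left one_add_one)
  qed
qed

theorem corollary5p1:
  fixes r2 r3 :: nat
  assumes "even r2" and "r2 \<ge> 4"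
  shows "(\<forall>G :: 'a graph. simple_graph G \<and> fst G \<noteq> {} \<and>
            ((4 * (r2 div 2 choose 2) < r3 \<and> r3 < r2 choose 2) \<or>
             ((r2 - 1) choose 2 < r3 \<and> r3 < 4 * (r2 div 2 choose 2)))
            \<longrightarrow> \<not> has_params G r2 r3)
       \<and> has_params (complete_graph (r2 + 1)) r2 (r2 choose 2)
       \<and> has_params (turan (r2 + 2) (r2 div 2 + 1)) r2 (4 * (r2 div 2 choose 2))
       \<and> has_params (cart_prod (complete_graph r2) (complete_graph 2)) r2 ((r2 - 1) choose 2)"
proof -
  have no_graph: "\<not> has_params G r2 r3"
    if "simple_graph G" "fst G \<noteq> {}"
      and "(4 * (r2 div 2 choose 2) < r3 \<and> r3 < r2 choose 2)
           \<or> ((r2 - 1) choose 2 < r3 \<and> r3 < 4 * (r2 div 2 choose 2))"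
    for G :: "'a graph"
  proof
    assume "has_params G r2 r3"
    then interpret nonedge_regular G r2 "r2 * (r2 - 1) - 2 * r3"
      using that(1) by (intro sgraph.nonedge_regular_if_has_params sgraph.intro)
    show False
      using nonedge_count_not_in_gap that(2) nonedge_count_in_gap[OF assms(1) that(3)] assms(2) by simp
  qed
  obtain k where k: "r2 = 2 * k"
    using assms(1) by blast
  have "4 * (r2 div 2 choose 2) = 2 * (k + 1 - 1) * (k + 1 - 2)"
    using two_mult_choose_two[of k] by (simp add: k)
  moreover have "r2 + 2 = 2 * (k + 1)" "r2 div 2 + 1 = k + 1" "r2 = 2 * (k + 1 - 1)"
    by (simp_all add: k)
  ultimately have "has_params (turan (r2 + 2) (r2 div 2 + 1)) r2 (4 * (r2 div 2 choose 2))"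
    using has_params_cocktail_party[of "k + 1"] by metis
  then show ?thesis
    using no_graph has_params_complete_graph has_params_complete_prism by blast
qed

end
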